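(* Let $E$ be a finite-dimensional real vector space and $\omega_0,\omega_1$ two symplectic forms on $E$. Then the space of complex structures $J$ on $E$ that are tamed by both $\omega_0$ and $\omega_1$ is either empty or contractible.
   Context: A complex structure $J$ ($J^2=-\mathrm{id}$) on $E$ is tamed by a symplectic form $\omega$ if $\omega(v,Jv)>0$ for every nonzero $v\in E$. *)

theory Defs
  imports "HOL-Analysis.Analysis"
begin

definition symplectic_form :: "(real^'n \<Rightarrow> real^'n \<Rightarrow> real) \<Rightarrow> bool" where
  "symplectic_form \<omega> \<longleftrightarrow> bilinear \<omega> \<and> (\<forall>x y. \<omega> x y = - \<omega> y x)
     \<and> (\<forall>x. (\<forall>y. \<omega> x y = 0) \<longrightarrow> x = 0)"

definition complex_structure :: "real^'n^'n \<Rightarrow> bool" where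
  "complex_structure J \<longleftrightarrow> J ** J = - mat 1"

definition tamed_by :: "real^'n^'n \<Rightarrow> (real^'n \<Rightarrow> real^'n \<Rightarrow> real) \<Rightarrow> bool" where
  "tamed_by J \<omega> \<longleftrightarrow> (\<forall>v. v \<noteq> 0 \<longrightarrow> \<omega> v (J *v v) > 0)"

end

theory Submission
  imports Defs
begin

text \<open>Fix a structure \<open>B\<close> tamed by all the given forms. For any other such \<open>A\<close>, the
  relative Cayley transform \<open>Z = (A + B)\<^sup>-\<^sup>1 (A - B)\<close> anticommutes with \<open>B\<close>, and conjugating
  \<open>B\<close> by \<open>1 - Z\<close> gives \<open>A\<close>. Conjugating by \<open>1 - t Z\<close> instead yields a path of complex
  structures from \<open>B\<close> to \<open>A\<close>, depending continuously on \<open>A\<close>. For a taming form \<open>\<omega>\<close> and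
  \<open>v = (1 - t Z) w\<close>, the quantity \<open>\<omega>(v, J\<^sub>t v)\<close> is \<open>a + t b - t\<^sup>2 c\<close> with \<open>a > 0\<close>, \<open>c \<ge> 0\<close>
  and a positive value at \<open>t = 1\<close>, hence positive on \<open>[0, 1]\<close>: the whole path stays tamed, and it
  contracts the space onto \<open>B\<close>.\<close>

lemma matrix_inv_right:
  fixes A :: "'a::semiring_1^'n^'m"
  assumes "invertible A"
  shows "A ** matrix_inv A = mat 1"
  using assms unfolding invertible_def matrix_inv_def by (rule someI_ex[THEN conjunct1])

lemma matrix_inv_left:
  fixes A :: "'a::semiring_1^'n^'m"
  assumes "invertible A"
  shows "matrix_inv A ** A = mat 1"
  using assms unfolding invertible_def matrix_inv_def by (rule someI_ex[THEN conjunct2])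

lemma invertible_matrix_inv:
  fixes A :: "'a::semiring_1^'n^'m"
  assumes "invertible A"
  shows "invertible (matrix_inv A)"
  using matrix_inv_left[OF assms] matrix_inv_right[OF assms] invertible_def by blast

lemma matrix_inv_mat_1 [simp]: "matrix_inv (mat 1 :: 'a::field^'n^'n) = mat 1"
  using matrix_inv_right[of "mat 1 :: 'a^'n^'n"] invertible_def by fastforce

lemma matrix_inv_intertwine:
  fixes M X Y :: "'a::field^'n^'n"
  assumes "invertible M" "M ** X = Y ** M"
  shows "X ** matrix_inv M = matrix_inv M ** Y"
proof -
  have "X ** matrix_inv M = matrix_inv M ** (M ** X) ** matrix_inv M"
    by (simp add: matrix_mul_assoc matrix_inv_left[OF assms(1)])
  also have "\<dots> = matrix_inv M ** Y"
    by (simp add: assms(2) matrix_mul_assoc[symmetric] matrix_inv_right[OF assms(1)])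
  finally show ?thesis .
qed

lemma matrix_inv_cramer:
  fixes A :: "'a::field^'n^'n"
  assumes "invertible A"
  shows "matrix_inv A = (\<chi> k j. det (\<chi> i l. if l = k then mat 1 $ i $ j else A $ i $ l) / det A)"
proof -
  have "A *v (\<chi> k. matrix_inv A $ k $ j) = (\<chi> i. mat 1 $ i $ j)" for j
    using matrix_inv_right[OF assms]
    by (simp add: vec_eq_iff matrix_vector_mult_def matrix_matrix_mult_def)
  then have "(\<chi> k. matrix_inv A $ k $ j) = (\<chi> k. det (\<chi> i l. if l = k then
      (\<chi> i. mat 1 $ i $ j) $ i else A $ i $ l) / det A)" for j
    using cramer[OF assms[unfolded invertible_det_nz]] by blast
  then show ?thesis
    by (simp add: vec_eq_iff cong: if_cong)
qed

lemma matrix_add_rdistrib: "((A::'a::semiring_1^'n^'m) + B) ** C = A ** C + B ** C"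
  by (simp add: matrix_matrix_mult_def vec_eq_iff sum.distrib distrib_right)

lemma matrix_diff_ldistrib: "(A::'a::ring_1^'n^'m) ** (B - C) = A ** B - A ** C"
  by (simp add: matrix_matrix_mult_def vec_eq_iff sum_subtractf right_diff_distrib)

lemma matrix_diff_rdistrib: "((A::'a::ring_1^'n^'m) - B) ** C = A ** C - B ** C"
  by (simp add: matrix_matrix_mult_def vec_eq_iff sum_subtractf left_diff_distrib)

lemma matrix_mul_lneg: "(- (A::'a::ring_1^'n^'m)) ** B = - (A ** B)"
  by (simp add: matrix_matrix_mult_def vec_eq_iff sum_negf)

lemma matrix_mul_rneg: "(A::'a::ring_1^'n^'m) ** (- B) = - (A ** B)"
  by (simp add: matrix_matrix_mult_def vec_eq_iff sum_negf)

lemma continuous_on_det [continuous_intros]: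
  fixes f :: "'a::topological_space \<Rightarrow> real^'n^'n"
  assumes "continuous_on S f"
  shows "continuous_on S (\<lambda>x. det (f x))"
  unfolding det_def by (intro continuous_intros assms)

lemma continuous_on_matrix_mult [continuous_intros]:
  fixes f :: "'a::topological_space \<Rightarrow> real^'n^'m" and g :: "'a \<Rightarrow> real^'p^'n"
  assumes "continuous_on S f" "continuous_on S g"
  shows "continuous_on S (\<lambda>x. f x ** g x)"
  unfolding matrix_matrix_mult_def by (intro continuous_intros assms)

lemma continuous_on_matrix_inv [continuous_intros]:
  fixes f :: "'a::topological_space \<Rightarrow> real^'n^'n"
  assumes "continuous_on S f" "\<And>x. x \<in> S \<Longrightarrow> invertible (f x)"
  shows "continuous_on S (\<lambda>x. matrix_inv (f x))"
proof -
  have entries: "continuous_on S (\<lambda>x. if l = k then c else f x $ i $ l)" for k l i c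
    by (cases "l = k") (auto intro!: continuous_intros assms(1))
  have "continuous_on S (\<lambda>x. \<chi> k j. det (\<chi> i l. if l = k then mat 1 $ i $ j else f x $ i $ l) / det (f x))"
    using assms by (intro continuous_intros entries) (auto simp: invertible_det_nz)
  then show ?thesis
    by (rule continuous_on_cong[THEN iffD1, rotated 2]) (simp_all add: matrix_inv_cramer assms(2))
qed

lemma bilinear_diff_scaleR_add_scaleR:
  assumes "bilinear \<omega>"
  shows "\<omega> (x - s *\<^sub>R y) (p + s *\<^sub>R q) = \<omega> x p + s * (\<omega> x q - \<omega> y p) - s\<^sup>2 * \<omega> y q"
  by (simp add: bilinear_radd[OF assms] bilinear_lsub[OF assms] bilinear_rmul[OF assms]
      bilinear_lmul[OF assms] algebra_simps power2_eq_square)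

lemma quadratic_pos_on_unit_interval:
  fixes a b c t :: real
  assumes "0 < a" "0 \<le> c" "0 < a + b - c" "0 \<le> t" "t \<le> 1"
  shows "0 < a + t * b - t\<^sup>2 * c"
proof -
  have "a + t * b - t\<^sup>2 * c = (1 - t) * a + t * (a + b - c) + t * (1 - t) * c"
    by (simp add: algebra_simps power2_eq_square)
  moreover have "0 < (1 - t) * a + t * (a + b - c)"
    using assms by (cases "t = 1") (auto intro: add_pos_nonneg)
  moreover have "0 \<le> t * (1 - t) * c"
    using assms by simp
  ultimately show ?thesis
    by linarith
qed

lemma tamed_by_imp_invertible:
  assumes "bilinear \<omega>" "tamed_by J \<omega>"
  shows "invertible J"
proof -
  have "x = 0" if "J *v x = 0" for x
    using assms that bilinear_rzero[OF assms(1)] by (force simp: tamed_by_def)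
  then show ?thesis
    using invertible_left_inverse matrix_left_invertible_ker by blast
qed

lemma tamed_by_positive_combination:
  fixes A B :: "real^'n^'n"
  assumes "bilinear \<omega>" "tamed_by A \<omega>" "tamed_by B \<omega>" "0 \<le> a" "0 \<le> b" "0 < a + b"
  shows "tamed_by (a *\<^sub>R A + b *\<^sub>R B) \<omega>"
  unfolding tamed_by_def
proof (intro allI impI)
  fix v :: "real^'n"
  assume "v \<noteq> 0"
  then have "\<omega> v (A *v v) > 0" "\<omega> v (B *v v) > 0"
    using assms(2,3) by (auto simp: tamed_by_def)
  moreover have "\<omega> v ((a *\<^sub>R A + b *\<^sub>R B) *v v) = a * \<omega> v (A *v v) + b * \<omega> v (B *v v)"
    by (simp add: matrix_vector_mult_add_rdistrib scaleR_matrix_vector_assoc[symmetric]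
        bilinear_radd[OF assms(1)] bilinear_rmul[OF assms(1)])
  ultimately show "\<omega> v ((a *\<^sub>R A + b *\<^sub>R B) *v v) > 0"
    using assms(4-6) by (smt (verit) mult_nonneg_nonneg mult_pos_pos)
qed

lemma invertible_add_tamed_by:
  assumes "bilinear \<omega>" "tamed_by A \<omega>" "tamed_by B \<omega>"
  shows "invertible (A + B)"
  using tamed_by_positive_combination[OF assms, of 1 1] tamed_by_imp_invertible[OF assms(1)]
  by simp

lemma tamed_by_conjugate_iff:
  fixes P J :: "real^'n^'n"
  assumes "invertible P"
  shows "tamed_by (P ** J ** matrix_inv P) \<omega> \<longleftrightarrow>
    (\<forall>w. w \<noteq> 0 \<longrightarrow> 0 < \<omega> (P *v w) (P *v (J *v w)))"
proof -
  have conj: "(P ** J ** matrix_inv P) *v (P *v w) = P *v (J *v w)" for w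
    by (simp add: matrix_vector_mul_assoc matrix_mul_assoc[symmetric] matrix_inv_left[OF assms])
  have P_eq_0: "P *v w = 0 \<longleftrightarrow> w = 0" for w
    using inj_matrix_vector_mult[OF assms] by (metis injD matrix_vector_mult_0_right)
  have "surj ((*v) P)"
    using matrix_inv_right[OF assms] by (metis matrix_vector_mul_assoc matrix_vector_mul_lid surjI)
  then show ?thesis
    unfolding tamed_by_def by (metis conj P_eq_0 surjD)
qed

lemma complex_structure_conjugate:
  assumes "complex_structure J" "invertible P"
  shows "complex_structure (P ** J ** matrix_inv P)"
proof -
  have "P ** J ** matrix_inv P ** (P ** J ** matrix_inv P) = P ** (J ** (matrix_inv P ** P) ** J) ** matrix_inv P"
    by (simp add: matrix_mul_assoc)
  also have "\<dots> = - mat 1"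
    using assms by (simp add: complex_structure_def matrix_inv_left matrix_inv_right matrix_mul_lneg matrix_mul_rneg)
  finally show ?thesis
    unfolding complex_structure_def .
qed

lemma complex_structures_sum_intertwine:
  assumes "complex_structure A" "complex_structure B"
  shows "(A + B) ** B = A ** (A + B)"
  using assms by (simp add: complex_structure_def matrix_add_rdistrib matrix_add_ldistrib add.commute)

definition cayley :: "real^'n^'n \<Rightarrow> real^'n^'n \<Rightarrow> real^'n^'n" where
  "cayley A B = matrix_inv (A + B) ** (A - B)"

lemma sum_mult_one_minus_cayley:
  assumes "invertible (A + B)"
  shows "(A + B) ** (mat 1 - t *\<^sub>R cayley A B) = (1 - t) *\<^sub>R A + (1 + t) *\<^sub>R B"
proof -
  have "(A + B) ** cayley A B = A - B"
    by (simp add: cayley_def matrix_mul_assoc matrix_inv_right[OF assms])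
  then have "(A + B) ** (mat 1 - t *\<^sub>R cayley A B) = (A + B) - t *\<^sub>R (A - B)"
    by (simp add: matrix_diff_ldistrib matrix_scalar_ac scalar_matrix_assoc[symmetric])
  then show ?thesis
    by (simp add: algebra_simps)
qed

lemma invertible_one_minus_cayley:
  assumes "bilinear \<omega>" "tamed_by A \<omega>" "tamed_by B \<omega>" "0 \<le> t" "t \<le> 1"
  shows "invertible (mat 1 - t *\<^sub>R cayley A B)"
proof -
  have "invertible (A + B)"
    using invertible_add_tamed_by[OF assms(1-3)] .
  moreover have "invertible ((A + B) ** (mat 1 - t *\<^sub>R cayley A B))"
    using tamed_by_positive_combination[OF assms(1-3), of "1 - t" "1 + t"] assms(4,5)
    by (simp add: sum_mult_one_minus_cayley[OF \<open>invertible (A + B)\<close>]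
        tamed_by_imp_invertible[OF assms(1)])
  ultimately show ?thesis
    by (metis invertible_matrix_inv invertible_mult matrix_inv_left matrix_mul_assoc matrix_mul_lid)
qed

lemma cayley_anticommute:
  assumes A: "complex_structure A" and B: "complex_structure B" and inv: "invertible (A + B)"
  shows "B ** cayley A B = - (cayley A B ** B)"
proof -
  let ?K = "matrix_inv (A + B)"
  have BK: "B ** ?K = ?K ** A"
    using matrix_inv_intertwine[OF inv complex_structures_sum_intertwine[OF A B]] .
  have "B ** cayley A B = ?K ** (A ** A - A ** B)"
    by (simp add: cayley_def matrix_mul_assoc BK matrix_diff_ldistrib)
  also have "\<dots> = - (?K ** (A ** B - B ** B))"
  proof -
    have "A ** A - A ** B = - (A ** B - B ** B)"
      using A B by (simp add: complex_structure_def)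
    then show ?thesis
      by (simp only: matrix_mul_rneg)
  qed
  also have "\<dots> = - (cayley A B ** B)"
    by (simp add: cayley_def matrix_mul_assoc[symmetric] matrix_diff_rdistrib)
  finally show ?thesis .
qed

lemma one_minus_cayley_mult:
  assumes "complex_structure A" "complex_structure B" "invertible (A + B)"
  shows "(mat 1 - s *\<^sub>R cayley A B) ** B = B ** (mat 1 + s *\<^sub>R cayley A B)"
proof -
  have "cayley A B ** B = - (B ** cayley A B)"
    using cayley_anticommute[OF assms] by simp
  then show ?thesis
    by (simp add: matrix_diff_rdistrib matrix_add_ldistrib matrix_scalar_ac
        scalar_matrix_assoc[symmetric])
qed

lemma one_minus_cayley_intertwine:
  assumes A: "complex_structure A" and B: "complex_structure B" and inv: "invertible (A + B)"
  shows "(mat 1 - cayley A B) ** B = A ** (mat 1 - cayley A B)"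
proof -
  let ?K = "matrix_inv (A + B)"
  have AK: "A ** ?K = ?K ** B"
    using matrix_inv_intertwine[OF _ complex_structures_sum_intertwine[OF B A]] inv
    by (simp add: add.commute)
  have "(A + B) ** (mat 1 - cayley A B) = 2 *\<^sub>R B"
    using sum_mult_one_minus_cayley[OF inv, of 1] by simp
  then have one_minus: "mat 1 - cayley A B = 2 *\<^sub>R (?K ** B)"
    by (metis inv matrix_inv_left matrix_mul_assoc matrix_mul_lid matrix_scalar_ac)
  have "(mat 1 - cayley A B) ** B = 2 *\<^sub>R (?K ** (B ** B))"
    by (simp add: one_minus scalar_matrix_assoc[symmetric] matrix_mul_assoc)
  also have "\<dots> = A ** (mat 1 - cayley A B)"
    by (simp add: one_minus matrix_scalar_ac scalar_matrix_assoc[symmetric] matrix_mul_assoc AK)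
  finally show ?thesis .
qed

definition cayley_path :: "real^'n^'n \<Rightarrow> real^'n^'n \<Rightarrow> real \<Rightarrow> real^'n^'n" where
  "cayley_path A B t = (mat 1 - t *\<^sub>R cayley A B) ** B ** matrix_inv (mat 1 - t *\<^sub>R cayley A B)"

lemma cayley_path_0 [simp]: "cayley_path A B 0 = B"
  by (simp add: cayley_path_def)

lemma cayley_path_1:
  assumes "complex_structure A" "complex_structure B" "invertible (A + B)"
    and "invertible (mat 1 - cayley A B)"
  shows "cayley_path A B 1 = A"
  using assms by (simp add: cayley_path_def one_minus_cayley_intertwine matrix_mul_assoc[symmetric]
      matrix_inv_right)

lemma tamed_by_cayley_path:
  fixes A B :: "real^'n^'n"
  assumes bil: "bilinear \<omega>"
    and A: "complex_structure A" "tamed_by A \<omega>" and B: "complex_structure B" "tamed_by B \<omega>"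
    and t: "0 \<le> t" "t \<le> 1"
  shows "tamed_by (cayley_path A B t) \<omega>"
proof -
  let ?Z = "cayley A B"
  let ?P = "\<lambda>s. mat 1 - s *\<^sub>R ?Z"
  have inv: "invertible (A + B)"
    using invertible_add_tamed_by[OF bil A(2) B(2)] .
  have invP: "invertible (?P s)" if "0 \<le> s" "s \<le> 1" for s
    using invertible_one_minus_cayley[OF bil A(2) B(2) that] .
  show ?thesis
    unfolding cayley_path_def tamed_by_conjugate_iff[OF invP[OF t]]
  proof (intro allI impI)
    fix w :: "real^'n"
    assume "w \<noteq> 0"
    define u where "u = ?Z *v w"
    have Pw: "?P s *v w = w - s *\<^sub>R u" for s
      by (simp add: u_def matrix_vector_mult_diff_rdistrib scaleR_matrix_vector_assoc)
    have PBw: "?P s *v (B *v w) = B *v w + s *\<^sub>R (B *v u)" for s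
    proof -
      have "?P s *v (B *v w) = B *v ((mat 1 + s *\<^sub>R ?Z) *v w)"
        by (simp only: matrix_vector_mul_assoc one_minus_cayley_mult[OF A(1) B(1) inv])
      then show ?thesis
        by (simp add: u_def matrix_vector_mult_add_rdistrib scaleR_matrix_vector_assoc[symmetric]
            matrix_vector_right_distrib matrix_vector_mult_scaleR)
    qed
    have a: "0 < \<omega> w (B *v w)"
      using B(2) \<open>w \<noteq> 0\<close> by (simp add: tamed_by_def)
    have c: "0 \<le> \<omega> u (B *v u)"
      using B(2) bilinear_lzero[OF bil] by (cases "u = 0") (auto simp: tamed_by_def less_imp_le)
    note expand = bilinear_diff_scaleR_add_scaleR[OF bil, of w _ u "B *v w" "B *v u"]
    have "w - u \<noteq> 0"
      using \<open>w \<noteq> 0\<close> inj_matrix_vector_mult[OF invP[of 1]] Pw[of 1]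
      by (metis injD matrix_vector_mult_0_right order.refl zero_le_one scaleR_one)
    then have "0 < \<omega> (w - u) (A *v (w - u))"
      using A(2) by (simp add: tamed_by_def)
    also have "A *v (w - u) = B *v w + B *v u"
      using one_minus_cayley_intertwine[OF A(1) B(1) inv] PBw[of 1] Pw[of 1]
      by (metis matrix_vector_mul_assoc scaleR_one)
    finally have "0 < \<omega> w (B *v w) + (\<omega> w (B *v u) - \<omega> u (B *v w)) - \<omega> u (B *v u)"
      using expand[of 1] by simp
    then show "0 < \<omega> (?P t *v w) (?P t *v (B *v w))"
      unfolding Pw PBw expand using quadratic_pos_on_unit_interval[OF a c _ t] by simp
  qed
qed

lemma continuous_on_cayley_path:
  assumes "\<And>A. A \<in> S \<Longrightarrow> invertible (A + B)"
    and "\<And>t A. t \<in> T \<Longrightarrow> A \<in> S \<Longrightarrow> invertible (mat 1 - t *\<^sub>R cayley A B)"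
  shows "continuous_on (T \<times> S) (\<lambda>(t, A). cayley_path A B t)"
  unfolding cayley_path_def cayley_def case_prod_unfold
  using assms by (intro continuous_intros) (auto simp: cayley_def)

definition tamed_complex_structures :: "(real^'n \<Rightarrow> real^'n \<Rightarrow> real) set \<Rightarrow> (real^'n^'n) set" where
  "tamed_complex_structures W = {J. complex_structure J \<and> (\<forall>\<omega>\<in>W. tamed_by J \<omega>)}"

lemma contractible_tamed_complex_structures:
  assumes "W \<noteq> {}" and bil: "\<And>\<omega>. \<omega> \<in> W \<Longrightarrow> bilinear \<omega>"
    and B: "B \<in> tamed_complex_structures W"
  shows "contractible (tamed_complex_structures W)"
proof -
  let ?S = "tamed_complex_structures W"
  let ?h = "\<lambda>(t, A). cayley_path A B t"
  obtain \<omega> where \<omega>: "\<omega> \<in> W"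
    using assms(1) by blast
  have inv: "invertible (A + B)" if "A \<in> ?S" for A
    using invertible_add_tamed_by[OF bil[OF \<omega>]] that B \<omega> by (auto simp: tamed_complex_structures_def)
  have invP: "invertible (mat 1 - t *\<^sub>R cayley A B)" if "t \<in> {0..1}" "A \<in> ?S" for t A
    using invertible_one_minus_cayley[OF bil[OF \<omega>]] that B \<omega> by (auto simp: tamed_complex_structures_def)
  have "?h (t, A) \<in> ?S" if "t \<in> {0..1}" "A \<in> ?S" for t A
  proof -
    have "complex_structure (cayley_path A B t)"
      unfolding cayley_path_def
      using complex_structure_conjugate[OF _ invP[OF that]] B
      by (simp add: tamed_complex_structures_def)
    moreover have "tamed_by (cayley_path A B t) \<omega>'" if "\<omega>' \<in> W" for \<omega>'
      using tamed_by_cayley_path[OF bil[OF that]] \<open>A \<in> ?S\<close> \<open>t \<in> {0..1}\<close> B that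
      by (simp add: tamed_complex_structures_def)
    ultimately show ?thesis
      by (simp add: tamed_complex_structures_def)
  qed
  then have "continuous_map (prod_topology (top_of_set {0..1}) (top_of_set ?S)) (top_of_set ?S) ?h"
    using continuous_on_cayley_path[OF inv invP]
    unfolding subtopology_Times[symmetric] prod_topology_euclidean continuous_map_subtopology_eu
    by blast
  moreover have "?h (1, A) = A" if "A \<in> ?S" for A
    using cayley_path_1 B that inv invP[of 1] by (auto simp: tamed_complex_structures_def)
  ultimately have "homotopic_with_canon (\<lambda>_. True) ?S ?S (\<lambda>_. B) id"
    unfolding homotopic_with[where P = "\<lambda>_. True", simplified]
    by (intro exI[of _ ?h]) simp
  then show ?thesis
    unfolding contractible_def using homotopic_with_symD by blast
qed

theorem proposition1p1:
  fixes \<omega>0 \<omega>1 :: "real^'n \<Rightarrow> real^'n \<Rightarrow> real"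
  assumes "symplectic_form \<omega>0" and "symplectic_form \<omega>1"
  shows "{J. complex_structure J \<and> tamed_by J \<omega>0 \<and> tamed_by J \<omega>1} = {}
       \<or> contractible {J. complex_structure J \<and> tamed_by J \<omega>0 \<and> tamed_by J \<omega>1}"
proof -
  have S: "{J. complex_structure J \<and> tamed_by J \<omega>0 \<and> tamed_by J \<omega>1}
      = tamed_complex_structures {\<omega>0, \<omega>1}"
    by (auto simp: tamed_complex_structures_def)
  have bil: "bilinear \<omega>" if "\<omega> \<in> {\<omega>0, \<omega>1}" for \<omega>
    using assms that unfolding symplectic_form_def by blast
  show ?thesis
  proof (cases "tamed_complex_structures {\<omega>0, \<omega>1} = {}")
    case False
    then obtain B where B: "B \<in> tamed_complex_structures {\<omega>0, \<omega>1}"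
      by blast
    have "contractible (tamed_complex_structures {\<omega>0, \<omega>1})"
      using contractible_tamed_complex_structures[OF _ bil B] by simp
    then show ?thesis
      unfolding S ..
  qed (simp add: S)
qed

end
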